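(* Let $E$ be a nonzero real Banach space, $K$ be a nonempty $w(E,E^* )$-compact convex subset of $E$ and $\mathbb I_K$ its indicator function. (a) If $y^{**}\in(\partial\mathbb I_K)^{\mathbb F}(y^* )$ then $y^{**}\in\widehat K$ and $\langle y^*,y^{**}\rangle=\sup_{x\in K}\langle x,y^*\rangle$. (b) $R((\partial\mathbb I_K)^{\mathbb F})\subset\widehat K\subset\widehat E$.
   Context: $\widehat x\in E^{**}$ is the canonical image of $x\in E$; $\widehat K=\{\widehat x:x\in K\}$, $\widehat E=\{\widehat x:x\in E\}$; $\mathbb I_K=0$ on $K$ and $\infty$ elsewhere. For proper convex lsc $f$, $x^*\in\partial f(x)$ iff $f(x)+f^*(x^* )=\langle x,x^*\rangle$; $\partial\mathbb I_K$ is closed, monotone and quasidense. For a multifunction $S\colon E\rightrightarrows E^*$ with nonempty graph: closed means $G(S)$ norm-closed; monotone means $\langle s-t,s^*-t^*\rangle\ge0$ on $G(S)$; quasidense means for every $(x,x^* )$, $\inf_{(s,s^* )\in G(S)}[\tfrac12\|s-x\|^2+\tfrac12\|s^*-x^*\|^2+\langle s-x,s^*-x^*\rangle]\le0$. Let $\varphi_S(x,x^* )=\sup_{(s,s^* )\in G(S)}[\langle s,x^*\rangle+\langle x,s^*\rangle-\langle s,s^*\rangle]$ and $\varphi_S^*$ its conjugate on $E^*\times E^{**}$ under $\langle (x,x^* ),(y^*,y^{**})\rangle=\langle x,y^*\rangle+\langle x^*,y^{**}\rangle$. For $S$ closed, monotone, quasidense, $S^{\mathbb F}\colon E^*\rightrightarrows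 E^{**}$ is given by $(y^*,y^{**})\in G(S^{\mathbb F})$ iff $\varphi_S^*(y^*,y^{**})=\langle y^*,y^{**}\rangle$; $R(\cdot)$ denotes range. *)

theory Defs
  imports "HOL-Analysis.Analysis" "HOL-Library.Extended_Real"
begin

text \<open>Dual E* is 'a \<Rightarrow>L real, bidual E** is ('a \<Rightarrow>L real) \<Rightarrow>L real.
  Pairings: <x,x*> = x* x ; <x*,x**> = x** x*.\<close>

definition weak_topology :: "('a::real_normed_vector) topology" where
  "weak_topology = topology_generated_by
      {blinfun_apply f -` U | (f :: 'a \<Rightarrow>\<^sub>L real) U. open U}"

definition canon :: "'a::real_normed_vector \<Rightarrow> (('a \<Rightarrow>\<^sub>L real) \<Rightarrow>\<^sub>L real)" where
  "canon x = Blinfun (\<lambda>f. blinfun_apply f x)"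

definition indic_fun :: "'a set \<Rightarrow> 'a \<Rightarrow> ereal" where
  "indic_fun K x = (if x \<in> K then 0 else \<infinity>)"

definition subdiff :: "('a::real_normed_vector \<Rightarrow> ereal) \<Rightarrow> 'a \<Rightarrow> ('a \<Rightarrow>\<^sub>L real) set" where
  "subdiff f x = {xs. f x \<noteq> \<infinity> \<and> (\<forall>y. f x + ereal (blinfun_apply xs (y - x)) \<le> f y)}"

definition graph :: "('a \<Rightarrow> 'b set) \<Rightarrow> ('a \<times> 'b) set" where
  "graph S = {(x, xs). xs \<in> S x}"

definition phi :: "('a::real_normed_vector \<Rightarrow> ('a \<Rightarrow>\<^sub>L real) set) \<Rightarrow> 'a \<Rightarrow> ('a \<Rightarrow>\<^sub>L real) \<Rightarrow> ereal" where
  "phi S x xs = (SUP p \<in> graph S.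
      ereal (blinfun_apply xs (fst p) + blinfun_apply (snd p) x - blinfun_apply (snd p) (fst p)))"

definition phi_conj :: "('a::real_normed_vector \<Rightarrow> ('a \<Rightarrow>\<^sub>L real) set)
     \<Rightarrow> ('a \<Rightarrow>\<^sub>L real) \<Rightarrow> (('a \<Rightarrow>\<^sub>L real) \<Rightarrow>\<^sub>L real) \<Rightarrow> ereal" where
  "phi_conj S ys yss = (SUP p \<in> (UNIV :: ('a \<times> ('a \<Rightarrow>\<^sub>L real)) set).
      ereal (blinfun_apply ys (fst p) + blinfun_apply yss (snd p)) - phi S (fst p) (snd p))"

definition SF :: "('a::real_normed_vector \<Rightarrow> ('a \<Rightarrow>\<^sub>L real) set)
     \<Rightarrow> ('a \<Rightarrow>\<^sub>L real) \<Rightarrow> (('a \<Rightarrow>\<^sub>L real) \<Rightarrow>\<^sub>L real) set" where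
  "SF S ys = {yss. phi_conj S ys yss = ereal (blinfun_apply yss ys)}"

definition mrange :: "('a \<Rightarrow> 'b set) \<Rightarrow> 'b set" where
  "mrange S = (\<Union>x. S x)"

end

theory Submission
  imports Defs
begin

text \<open>
  Write \<open>S = \<partial>\<I>\<^sub>K\<close>, so that \<open>G(S)\<close> consists of pairs \<open>(s, s\<^sup>*)\<close> with \<open>s \<in> K\<close> and
  \<open>s\<^sup>*\<close> attaining its maximum over \<open>K\<close> at \<open>s\<close>. Hence \<open>\<phi>\<^sub>S(x, x\<^sup>*) \<le> \<langle>x, x\<^sup>*\<rangle>\<close> whenever \<open>x\<^sup>*\<close>
  attains its maximum over \<open>K\<close> at \<open>x \<in> K\<close>, and \<open>y\<^sup>*\<^sup>* \<in> S\<^sup>\<FF>(y\<^sup>*)\<close> yields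
  \<open>\<langle>x, y\<^sup>*\<rangle> + \<langle>x\<^sup>*, y\<^sup>*\<^sup>*\<rangle> - \<langle>x, x\<^sup>*\<rangle> \<le> \<langle>y\<^sup>*, y\<^sup>*\<^sup>*\<rangle>\<close> for all such pairs.
  To see that \<open>y\<^sup>*\<^sup>* = canon x\<close> for some \<open>x \<in> K\<close>, by weak compactness it suffices to match \<open>y\<^sup>*\<^sup>*\<close> on
  finitely many functionals \<open>f\<^sub>1, \<dots>, f\<^sub>n\<close>. Take \<open>k\<^sub>0 \<in> K\<close> minimising \<open>\<Sum> (f\<^sub>i(k) - \<langle>f\<^sub>i, y\<^sup>*\<^sup>*\<rangle>)\<^sup>2\<close>;
  its first-order condition says that \<open>x\<^sup>* = \<Sum> (\<langle>f\<^sub>i, y\<^sup>*\<^sup>*\<rangle> - f\<^sub>i(k\<^sub>0)) f\<^sub>i\<close> attains its maximum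
  over \<open>K\<close> at \<open>k\<^sub>0\<close>, and the inequality above applied to \<open>t x\<^sup>*\<close> for \<open>t \<rightarrow> \<infinity>\<close> forces the
  residual to vanish. Finally the inequality with \<open>x\<^sup>* = 0\<close> identifies \<open>\<langle>y\<^sup>*, y\<^sup>*\<^sup>*\<rangle>\<close> with
  the supremum.
\<close>

lemma openin_weak_topology_vimage:
  fixes f :: "'a::real_normed_vector \<Rightarrow>\<^sub>L real"
  assumes "open U"
  shows "openin weak_topology (blinfun_apply f -` U)"
  unfolding weak_topology_def using assms by (blast intro: topology_generated_by_Basis)

lemma topspace_weak_topology: "topspace (weak_topology :: 'a::real_normed_vector topology) = UNIV"
  using openin_weak_topology_vimage[of UNIV "0 :: 'a \<Rightarrow>\<^sub>L real"] openin_subset by auto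

lemma continuous_map_weak_topology_blinfun:
  "continuous_map weak_topology euclideanreal (blinfun_apply (f :: 'a::real_normed_vector \<Rightarrow>\<^sub>L real))"
  unfolding continuous_map_def topspace_weak_topology
  using openin_weak_topology_vimage[unfolded vimage_def] by auto

lemma graph_subdiff_indic_funD:
  assumes "(s, s') \<in> graph (subdiff (indic_fun K))"
  shows "s \<in> K" and "\<And>y. y \<in> K \<Longrightarrow> blinfun_apply s' y \<le> blinfun_apply s' s"
proof -
  have fin: "indic_fun K s \<noteq> \<infinity>"
    and sub: "\<And>y. indic_fun K s + ereal (blinfun_apply s' (y - s)) \<le> indic_fun K y"
    using assms unfolding graph_def subdiff_def by auto
  from fin show "s \<in> K" unfolding indic_fun_def by (auto split: if_splits)
  fix y assume "y \<in> K"
  with sub[of y] \<open>s \<in> K\<close> show "blinfun_apply s' y \<le> blinfun_apply s' s"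
    unfolding indic_fun_def by (simp add: blinfun.diff_right)
qed

lemma phi_subdiff_indic_fun_le:
  assumes "x \<in> K" and "\<And>k. k \<in> K \<Longrightarrow> blinfun_apply x' k \<le> blinfun_apply x' x"
  shows "phi (subdiff (indic_fun K)) x x' \<le> ereal (blinfun_apply x' x)"
  unfolding phi_def
proof (rule SUP_least)
  fix p assume "p \<in> graph (subdiff (indic_fun K))"
  moreover obtain s s' where "p = (s, s')" by fastforce
  ultimately have "(s, s') \<in> graph (subdiff (indic_fun K))" by simp
  with graph_subdiff_indic_funD assms
  have "blinfun_apply x' s \<le> blinfun_apply x' x" "blinfun_apply s' x \<le> blinfun_apply s' s"
    by blast+
  then show "ereal (blinfun_apply x' (fst p) + blinfun_apply (snd p) x - blinfun_apply (snd p) (fst p))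
      \<le> ereal (blinfun_apply x' x)" using \<open>p = (s, s')\<close> by simp
qed

lemma SF_subdiff_indic_fun_ineq:
  assumes "y'' \<in> SF (subdiff (indic_fun K)) y'"
    and "x \<in> K" and "\<And>k. k \<in> K \<Longrightarrow> blinfun_apply x' k \<le> blinfun_apply x' x"
  shows "blinfun_apply y' x + blinfun_apply y'' x' - blinfun_apply x' x \<le> blinfun_apply y'' y'"
proof -
  let ?S = "subdiff (indic_fun K)"
  have "ereal (blinfun_apply y' x + blinfun_apply y'' x') - ereal (blinfun_apply x' x)
      \<le> ereal (blinfun_apply y' x + blinfun_apply y'' x') - phi ?S x x'"
    using phi_subdiff_indic_fun_le[OF assms(2,3)] by (intro ereal_minus_mono) auto
  also have "\<dots> \<le> phi_conj ?S y' y''"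
    unfolding phi_conj_def by (rule SUP_upper2[of "(x, x')"]) auto
  also have "\<dots> = ereal (blinfun_apply y'' y')"
    using assms(1) unfolding SF_def by simp
  finally show ?thesis by simp
qed

lemma nonneg_if_nonneg_affine_near_0:
  fixes a b :: real
  assumes "\<And>t. 0 < t \<Longrightarrow> t \<le> 1 \<Longrightarrow> 0 \<le> a + t * b"
  shows "0 \<le> a"
proof (rule tendsto_lowerbound)
  show "((\<lambda>t. a + t * b) \<longlongrightarrow> a) (at_right 0)"
    by (auto intro!: tendsto_eq_intros)
  show "\<forall>\<^sub>F t in at_right 0. 0 \<le> a + t * b"
    using assms by (auto simp: eventually_at_right_field intro!: exI[of _ 1])
qed simp

lemma nonpos_if_multiples_bounded:
  fixes c d :: real
  assumes "\<And>t. 0 \<le> t \<Longrightarrow> t * d \<le> c"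
  shows "d \<le> 0"
proof (rule ccontr)
  assume "\<not> d \<le> 0"
  then have "(\<bar>c\<bar> + 1) / d * d = \<bar>c\<bar> + 1" "0 \<le> (\<bar>c\<bar> + 1) / d" by auto
  with assms[of "(\<bar>c\<bar> + 1) / d"] show False by linarith
qed

lemma least_squares_minimizer_maximizes:
  fixes l :: "'i \<Rightarrow> 'a::real_vector \<Rightarrow> real"
  assumes "convex K" "k0 \<in> K" "k \<in> K" and lin: "\<And>i. linear (l i)"
    and min: "\<And>k. k \<in> K \<Longrightarrow> (\<Sum>i\<in>F. (l i k0 - a i)\<^sup>2) \<le> (\<Sum>i\<in>F. (l i k - a i)\<^sup>2)"
  shows "(\<Sum>i\<in>F. (a i - l i k0) * l i k) \<le> (\<Sum>i\<in>F. (a i - l i k0) * l i k0)"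
proof -
  define e where "e i = l i k0 - a i" for i
  define d where "d i = l i k - l i k0" for i
  have "0 \<le> 2 * (\<Sum>i\<in>F. e i * d i) + t * (\<Sum>i\<in>F. (d i)\<^sup>2)" if t: "0 < t" "t \<le> 1" for t
  proof -
    let ?kt = "(1 - t) *\<^sub>R k0 + t *\<^sub>R k"
    have "?kt \<in> K" using assms(1-3) t by (simp add: convex_def)
    have kt: "l i ?kt - a i = e i + t * d i" for i
    proof -
      have "l i ?kt = (1 - t) * l i k0 + t * l i k"
        by (simp only: linear_add[OF lin] linear_scale[OF lin] real_scaleR_def)
      then show ?thesis by (simp add: e_def d_def algebra_simps)
    qed
    have "(\<Sum>i\<in>F. (e i)\<^sup>2) \<le> (\<Sum>i\<in>F. (l i ?kt - a i)\<^sup>2)"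
      using min[OF \<open>?kt \<in> K\<close>] unfolding e_def .
    also have "\<dots> = (\<Sum>i\<in>F. (e i + t * d i)\<^sup>2)"
      by (simp only: kt)
    also have "\<dots> = (\<Sum>i\<in>F. (e i)\<^sup>2) + t * (2 * (\<Sum>i\<in>F. e i * d i) + t * (\<Sum>i\<in>F. (d i)\<^sup>2))"
      by (simp add: power2_eq_square sum.distrib sum_distrib_left algebra_simps)
    finally show ?thesis using t by (simp add: zero_le_mult_iff)
  qed
  then have "0 \<le> 2 * (\<Sum>i\<in>F. e i * d i)"
    by (rule nonneg_if_nonneg_affine_near_0)
  moreover have "(\<Sum>i\<in>F. (a i - l i k0) * l i k) - (\<Sum>i\<in>F. (a i - l i k0) * l i k0)
      = (\<Sum>i\<in>F. - (e i * d i))"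
    unfolding sum_subtractf[symmetric] by (rule sum.cong) (simp_all add: e_def d_def algebra_simps)
  ultimately show ?thesis
    by (simp add: sum_negf)
qed

lemma SF_subdiff_indic_fun_agrees_on_finite:
  fixes K :: "'a::real_normed_vector set"
  assumes "y'' \<in> SF (subdiff (indic_fun K)) y'"
    and "K \<noteq> {}" "compactin weak_topology K" "convex K" "finite F"
  shows "\<exists>k0\<in>K. \<forall>f\<in>F. blinfun_apply f k0 = blinfun_apply y'' f"
proof -
  define h where "h k = (\<Sum>f\<in>F. (blinfun_apply f k - blinfun_apply y'' f)\<^sup>2)" for k
  have h_cont: "continuous_map weak_topology euclideanreal h"
    unfolding h_def using assms(5) by (intro continuous_map_sum continuous_map_real_pow continuous_map_diff
        continuous_map_weak_topology_blinfun continuous_map_const[THEN iffD2]) auto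
  have "compact (h ` K)"
    using image_compactin[OF assms(3) h_cont] by simp
  then obtain k0 where k0: "k0 \<in> K" "\<And>k. k \<in> K \<Longrightarrow> h k0 \<le> h k"
    using compact_attains_inf[of "h ` K"] assms(2) by auto
  define c where "c f = blinfun_apply y'' f - blinfun_apply f k0" for f
  define x' where "x' = (\<Sum>f\<in>F. c f *\<^sub>R f)"
  have x'_apply: "blinfun_apply x' k = (\<Sum>f\<in>F. c f * blinfun_apply f k)" for k
    unfolding x'_def by (simp add: blinfun.sum_left blinfun.scaleR_left)
  have x'_max: "blinfun_apply x' k \<le> blinfun_apply x' k0" if "k \<in> K" for k
    using least_squares_minimizer_maximizes[where l = blinfun_apply and a = "blinfun_apply y''",
        OF assms(4) k0(1) that]
      k0(2)[unfolded h_def]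
    unfolding x'_apply c_def by (simp add: bounded_linear.linear[OF blinfun.bounded_linear_right])
  have "blinfun_apply y'' x' - blinfun_apply x' k0
      = (\<Sum>f\<in>F. c f * blinfun_apply y'' f - c f * blinfun_apply f k0)"
    unfolding x'_def by (simp add: blinfun.sum_right blinfun.scaleR_right x'_apply[unfolded x'_def]
        sum_subtractf)
  also have "\<dots> = (\<Sum>f\<in>F. (c f)\<^sup>2)"
    by (simp add: c_def power2_eq_square right_diff_distrib[symmetric])
  finally have residual: "blinfun_apply y'' x' - blinfun_apply x' k0 = (\<Sum>f\<in>F. (c f)\<^sup>2)" .
  have "t * (\<Sum>f\<in>F. (c f)\<^sup>2) \<le> blinfun_apply y'' y' - blinfun_apply y' k0" if "0 \<le> t" for t
  proof -
    have "blinfun_apply y' k0 + blinfun_apply y'' (t *\<^sub>R x') - blinfun_apply (t *\<^sub>R x') k0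
        \<le> blinfun_apply y'' y'"
      using x'_max that by (intro SF_subdiff_indic_fun_ineq[OF assms(1) k0(1)])
        (simp add: blinfun.scaleR_left mult_left_mono)
    moreover have "blinfun_apply y'' (t *\<^sub>R x') - blinfun_apply (t *\<^sub>R x') k0
        = t * (\<Sum>f\<in>F. (c f)\<^sup>2)"
      by (simp add: blinfun.scaleR_right blinfun.scaleR_left residual[symmetric] right_diff_distrib)
    ultimately show ?thesis by linarith
  qed
  then have "(\<Sum>f\<in>F. (c f)\<^sup>2) \<le> 0"
    by (rule nonpos_if_multiples_bounded)
  then have "\<forall>f\<in>F. c f = 0"
    using sum_nonneg_eq_0_iff[OF assms(5), of "\<lambda>f. (c f)\<^sup>2"] by (simp add: antisym sum_nonneg)
  with k0(1) show ?thesis unfolding c_def by auto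
qed

lemma SF_subdiff_indic_fun_in_canon_image:
  fixes K :: "'a::real_normed_vector set"
  assumes "y'' \<in> SF (subdiff (indic_fun K)) y'"
    and "K \<noteq> {}" "compactin weak_topology K" "convex K"
  obtains k where "k \<in> K" "canon k = y''"
proof -
  define U where "U f = {x. blinfun_apply f x \<noteq> blinfun_apply y'' f}" for f
  have U_open: "openin weak_topology (U f)" for f
    using openin_weak_topology_vimage[of "- {blinfun_apply y'' f}" f]
    unfolding U_def by (simp add: vimage_def open_Compl)
  have "\<exists>k\<in>K. \<forall>f. blinfun_apply f k = blinfun_apply y'' f"
  proof (rule ccontr)
    assume "\<not> ?thesis"
    then have "K \<subseteq> \<Union> (range U)" unfolding U_def by auto
    with assms(3) U_open
    obtain G where "finite G" "G \<subseteq> range U" "K \<subseteq> \<Union> G"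
      unfolding compactin_def by (metis (no_types, lifting) imageE)
    then obtain F where "finite F" "K \<subseteq> \<Union> (U ` F)"
      by (metis finite_subset_image)
    with SF_subdiff_indic_fun_agrees_on_finite[OF assms] show False
      unfolding U_def by blast
  qed
  then obtain k where "k \<in> K" "\<And>f. blinfun_apply f k = blinfun_apply y'' f" by blast
  moreover from this(2) have "canon k = y''"
    unfolding canon_def by (simp add: blinfun_apply_inverse)
  ultimately show thesis using that by blast
qed

theorem lemma3p5:
  fixes K :: "'a::banach set"
  assumes "\<exists>x::'a. x \<noteq> 0"
    and "K \<noteq> {}"
    and "compactin weak_topology K"
    and "convex K"
  shows "((\<forall>ys yss. yss \<in> SF (subdiff (indic_fun K)) ys \<longrightarrow>
            yss \<in> canon ` K \<and> blinfun_apply yss ys = (SUP x\<in>K. blinfun_apply ys x))) \<and>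
         (mrange (SF (subdiff (indic_fun K))) \<subseteq> canon ` K \<and> canon ` K \<subseteq> canon ` (UNIV :: 'a set))"
proof -
  have "yss \<in> canon ` K \<and> blinfun_apply yss ys = (SUP x\<in>K. blinfun_apply ys x)"
    if SF: "yss \<in> SF (subdiff (indic_fun K)) ys" for ys yss
  proof -
    obtain k where k: "k \<in> K" "canon k = yss"
      using SF_subdiff_indic_fun_in_canon_image[OF SF assms(2-4)] .
    have yss_ys: "blinfun_apply yss ys = blinfun_apply ys k"
      using k(2) unfolding canon_def by (auto simp: bounded_linear_Blinfun_apply blinfun.bounded_linear_left)
    have "blinfun_apply ys x \<le> blinfun_apply ys k" if "x \<in> K" for x
      using SF_subdiff_indic_fun_ineq[OF SF that, of 0] yss_ys by simp
    then have "(SUP x\<in>K. blinfun_apply ys x) = blinfun_apply ys k"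
      using k(1) by (intro cSup_eq_maximum) auto
    with k yss_ys show ?thesis by auto
  qed
  then show ?thesis unfolding mrange_def by blast
qed

end
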